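(* Let $p>0$ be a real number and let $n=\lceil p\rceil$. Then the power function $\Phi:\mathbb{R}_+\to\mathbb{R}_+$, $\Phi(x)=x^p$, is subadditive of order $n$.
   Context: $\mathbb{R}_+$ denotes the set of nonnegative real numbers. For $n\in\mathbb{N}$ and an interval $I\subseteq\mathbb{R}_+$, a function $\Phi: I\to\mathbb{R}_+$ is called subadditive of order $n$ if for all $x,y\in I$ with $y>0$ and $x+y\in I$ one has $\Phi(x+y)\leq \Phi(x)+\frac{(x+y)^n-x^n}{y^n}\Phi(y)$. *)

theory Defs
  imports "HOL-Analysis.Analysis"
begin

definition subadditive_of_order :: "nat \<Rightarrow> real set \<Rightarrow> (real \<Rightarrow> real) \<Rightarrow> bool" where
  "subadditive_of_order n I \<Phi> \<longleftrightarrow>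
     I \<subseteq> {0..} \<and> is_interval I \<and> (\<forall>x\<in>I. \<Phi> x \<ge> 0) \<and>
     (\<forall>x\<in>I. \<forall>y\<in>I. y > 0 \<longrightarrow> x + y \<in> I \<longrightarrow>
        \<Phi> (x + y) \<le> \<Phi> x + ((x + y) ^ n - x ^ n) / y ^ n * \<Phi> y)"

end

theory Submission
  imports Defs
begin

text \<open>Both sides are homogeneous of degree \<open>p\<close> in \<open>(x, y)\<close>, so it suffices to take \<open>y = 1\<close>
and show \<open>(t+1)\<^sup>p - t\<^sup>p \<le> (t+1)\<^sup>n - t\<^sup>n\<close> for \<open>t \<ge> 0\<close>. This holds for any exponents
\<open>p \<le> n\<close>: the function \<open>s\<^sup>n - s\<^sup>p\<close> is nonpositive on \<open>[0,1]\<close>, nonnegative and increasing on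
\<open>[1,\<infinity>)\<close>, hence never larger at \<open>t\<close> than at \<open>t + 1\<close>.\<close>

lemma powr_diff_mono_on_ge_one:
  fixes p q s s' :: real
  assumes "0 \<le> p" "p \<le> q" "1 \<le> s" "s \<le> s'"
  shows "s powr q - s powr p \<le> s' powr q - s' powr p"
proof -
  have split: "u powr q - u powr p = u powr p * (u powr (q - p) - 1)" for u :: real
    by (simp add: powr_add [symmetric] algebra_simps)
  have "s powr p * (s powr (q - p) - 1) \<le> s' powr p * (s' powr (q - p) - 1)"
    using assms by (intro mult_mono) (auto intro: powr_mono2 simp: ge_one_powr_ge_zero)
  then show ?thesis
    by (simp only: split)
qed

lemma powr_increment_mono_exponent:
  fixes t p q :: real
  assumes "0 \<le> t" "0 \<le> p" "p \<le> q"
  shows "(t + 1) powr p - t powr p \<le> (t + 1) powr q - t powr q"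
proof (cases "t \<le> 1")
  case True
  have "t powr q \<le> t powr p"
    using assms True by (intro powr_mono')
  moreover have "(t + 1) powr p \<le> (t + 1) powr q"
    using assms by (intro powr_mono) auto
  ultimately show ?thesis
    by linarith
next
  case False
  then show ?thesis
    using powr_diff_mono_on_ge_one [OF assms(2,3), of t "t + 1"] by simp
qed

lemma powr_le_binomial_increment:
  fixes x y p :: real and n :: nat
  assumes "0 \<le> x" "0 < y" "0 < p" "p \<le> real n"
  shows "(x + y) powr p \<le> x powr p + ((x + y) ^ n - x ^ n) / y ^ n * y powr p"
proof -
  define t where "t = x / y"
  have "0 \<le> t"
    using assms by (simp add: t_def)
  have x_eq: "x = t * y" and xy_eq: "x + y = (t + 1) * y"
    using assms by (simp_all add: t_def field_simps)
  have "n \<noteq> 0"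
    using assms by auto
  have "(t + 1) powr p - t powr p \<le> (t + 1) ^ n - t ^ n"
    using powr_increment_mono_exponent [OF \<open>0 \<le> t\<close>, of p "real n"] assms \<open>n \<noteq> 0\<close> \<open>0 \<le> t\<close>
    by (simp add: powr_realpow')
  then have scaled: "((t + 1) powr p - t powr p) * y powr p \<le> ((t + 1) ^ n - t ^ n) * y powr p"
    by (simp add: mult_right_mono)
  have quotient: "((x + y) ^ n - x ^ n) / y ^ n = (t + 1) ^ n - t ^ n"
  proof -
    have "(x + y) ^ n - x ^ n = ((t + 1) ^ n - t ^ n) * y ^ n"
      unfolding xy_eq power_mult_distrib by (subst x_eq) (simp add: power_mult_distrib algebra_simps)
    then show ?thesis
      using assms by simp
  qed
  have lhs: "(x + y) powr p = (t + 1) powr p * y powr p"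
    unfolding xy_eq using assms \<open>0 \<le> t\<close> by (simp add: powr_mult)
  have rhs: "x powr p = t powr p * y powr p"
    unfolding x_eq using assms \<open>0 \<le> t\<close> by (simp add: powr_mult)
  show ?thesis
    unfolding quotient lhs rhs using scaled by (simp add: algebra_simps)
qed

lemma powr_subadditive_of_order:
  fixes p :: real and n :: nat
  assumes "0 < p" "p \<le> real n"
  shows "subadditive_of_order n {0..} (\<lambda>x. x powr p)"
  unfolding subadditive_of_order_def
  using powr_le_binomial_increment [OF _ _ assms] by (auto simp: is_interval_ci)

theorem corollary2p2:
  fixes p :: real and n :: nat
  assumes "p > 0" and "n = nat \<lceil>p\<rceil>"
  shows "subadditive_of_order n {0..} (\<lambda>x. x powr p)"
  using assms by (intro powr_subadditive_of_order) linarith+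

end
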